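(* Let $X$ and $Y$ be spaces with $X$ compact Hausdorff, let $a\colon X\to Y$ be a map, and let $E$ be a nonempty finite set. Then every affine ensemble $Q\in\langle (Y^X,a)^{\check C\Delta E}\rangle$ is $(X,1)$-almost fissile.
   Context: Spaces and maps are based unless called unbased. $\langle W\rangle$ = free abelian group on a set $W$; augmentation $\epsilon\colon\langle W\rangle\to\mathbb Z$, $\langle w\rangle\mapsto1$; an ensemble is affine if $\epsilon=1$. $Y^X$ = space of based maps $X\to Y$ (compact-open); $(Y^X,a)$ is this space with basepoint $a$. $V\mapsto V|_R$ restriction homomorphisms; $\mathcal F_n(Z)$ = finite subsets of $Z$ containing the basepoint with at most $n+1$ elements; for based $Z$, $\langle Y^Z\rangle^{(s)}=\{V:V|_R=0\ \forall R\in\mathcal F_{s-1}(Z)\}$. For unbased $U$, $(Y^X)^{(U)}$ = unbased maps $U\to Y^X$; $U\wr X=(U\times X)/(U\times\{x_0\})$; $\#^X(w)(u\wr x)=w(u)(x)$ is a bijection $(Y^X)^{(U)}\to Y^{U\wr X}$, and $\langle (Y^X)^{(U)}\rangle^{(s)}_X=\langle\#^X\rangle^{-1}\langle Y^{U\wr X}\rangle^{(s)}$. For a based space $T$, $\langle (Y^X,a)^T\rangle$ (based maps $T\to(Y^X,a)$) is regarded inside $\langle (Y^X)^{(T)}\rangle$. For nonempty finite $E$: simplex $\Delta E$, faces $\Delta F$; a layout is a set $A$ of pairwise disjoint nonempty subsets of $E$. Cone $\check CU=(U\times[0,1])/(U\times\{0\})$ based at the apex; $\check C\Delta F\subseteq\check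 C\Delta E$ and $\check C\Delta[A]=\bigvee_{F\in A}\check C\Delta F$. Combining product $\boxed{\vee}\colon\prod_{F\in A}\langle Z^{\check C\Delta F}\rangle\to\langle Z^{\check C\Delta[A]}\rangle$ multilinear with $\boxed{\vee}_F\langle v_F\rangle=\langle\bar\bigvee_Fv_F\rangle$. $Q\in\langle (Y^X,a)^{\check C\Delta E}\rangle$ is $(X,r)$-almost fissile if, for every layout $A$, $\boxed{\vee}_{F\in A}Q|_{\check C\Delta F}-Q|_{\check C\Delta[A]}\in\langle (Y^X)^{(\check C\Delta[A])}\rangle^{(r+1)}_X$. *)

theory Defs
  imports "HOL-Analysis.Analysis" "HOL-Library.Poly_Mapping"
begin

(* The free abelian group on a set W is modelled as the integer-valued
finitely supported functions ('a \<Rightarrow>\<^sub>0 int) with keys in W; frag_of w is the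
generator of w, and frag_extend is linear extension. *)

definition in_free :: "('a \<Rightarrow>\<^sub>0 int) \<Rightarrow> 'a set \<Rightarrow> bool" where
  "in_free V W \<longleftrightarrow> Poly_Mapping.keys V \<subseteq> W"

definition augm :: "('a \<Rightarrow>\<^sub>0 int) \<Rightarrow> int" where
  "augm V = (\<Sum>w \<in> Poly_Mapping.keys V. Poly_Mapping.lookup V w)"

definition affine_ens :: "('a \<Rightarrow>\<^sub>0 int) \<Rightarrow> bool" where
  "affine_ens V \<longleftrightarrow> augm V = 1"

(* Restriction homomorphism V \<mapsto> V|_R (maps are extensional functions). *)
definition restr_frag :: "'u set \<Rightarrow> (('u \<Rightarrow> 'b) \<Rightarrow>\<^sub>0 int) \<Rightarrow> (('u \<Rightarrow> 'b) \<Rightarrow>\<^sub>0 int)" where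
  "restr_frag R V = frag_extend (\<lambda>v. frag_of (restrict v R)) V"

definition Fsets :: "nat \<Rightarrow> 'z set \<Rightarrow> 'z \<Rightarrow> 'z set set" where
  "Fsets n Z z0 = {R. finite R \<and> R \<subseteq> Z \<and> z0 \<in> R \<and> card R \<le> n + 1}"

(* \<langle>Y^Z\<rangle>^(s) = {V. V|_R = 0 for all R in F_(s-1)(Z)}  (used for s \<ge> 1). *)
definition filt :: "nat \<Rightarrow> 'z set \<Rightarrow> 'z \<Rightarrow> (('z \<Rightarrow> 'b) \<Rightarrow>\<^sub>0 int) set" where
  "filt s Z z0 = {V. \<forall>R \<in> Fsets (s - 1) Z z0. restr_frag R V = 0}"

definition bmaps :: "'x topology \<Rightarrow> 'x \<Rightarrow> 'y topology \<Rightarrow> 'y \<Rightarrow> ('x \<Rightarrow> 'y) set" where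
  "bmaps X x0 Y y0 = {f. continuous_map X Y f \<and> f x0 = y0 \<and> f \<in> extensional (topspace X)}"

definition compact_open :: "'x topology \<Rightarrow> 'x \<Rightarrow> 'y topology \<Rightarrow> 'y \<Rightarrow> ('x \<Rightarrow> 'y) topology" where
  "compact_open X x0 Y y0 =
     subtopology
       (topology_generated_by {{f. f ` K \<subseteq> U} | K U. compactin X K \<and> openin Y U})
       (bmaps X x0 Y y0)"

definition umaps :: "'t topology \<Rightarrow> 'z topology \<Rightarrow> ('t \<Rightarrow> 'z) set" where
  "umaps T Z = {w. continuous_map T Z w \<and> w \<in> extensional (topspace T)}"

definition based_maps :: "'t topology \<Rightarrow> 't \<Rightarrow> 'z topology \<Rightarrow> 'z \<Rightarrow> ('t \<Rightarrow> 'z) set" where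
  "based_maps T t0 Z z0 = {w. continuous_map T Z w \<and> w t0 = z0 \<and> w \<in> extensional (topspace T)}"

(* The underlying based set of U \<ltimes> X = (U \<times> X)/(U \<times> {x0}): None is the base
point (the collapsed set U \<times> {x0}), Some (u,x) with x \<noteq> x0 the other points. *)
definition smash_set :: "'u set \<Rightarrow> 'x topology \<Rightarrow> 'x \<Rightarrow> ('u \<times> 'x) option set" where
  "smash_set U X x0 = insert None (Some ` (U \<times> (topspace X - {x0})))"

definition sharp :: "'x topology \<Rightarrow> 'x \<Rightarrow> 'y \<Rightarrow> 'u set \<Rightarrow> ('u \<Rightarrow> 'x \<Rightarrow> 'y)
                     \<Rightarrow> (('u \<times> 'x) option \<Rightarrow> 'y)" where
  "sharp X x0 y0 U w =
     restrict (\<lambda>p. case p of None \<Rightarrow> y0 | Some (u, x) \<Rightarrow> w u x) (smash_set U X x0)"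

(* \<langle>(Y^X)^(U)\<rangle>^(s)_X = \<langle>#^X\<rangle>^{-1} \<langle>Y^(U \<ltimes> X)\<rangle>^(s), for a space T with underlying set U. *)
definition filtX :: "nat \<Rightarrow> 'u topology \<Rightarrow> 'x topology \<Rightarrow> 'x \<Rightarrow> 'y topology \<Rightarrow> 'y
                     \<Rightarrow> (('u \<Rightarrow> 'x \<Rightarrow> 'y) \<Rightarrow>\<^sub>0 int) set" where
  "filtX s T X x0 Y y0 =
     {V. in_free V (umaps T (compact_open X x0 Y y0)) \<and>
         frag_extend (\<lambda>w. frag_of (sharp X x0 y0 (topspace T) w)) V
           \<in> filt s (smash_set (topspace T) X x0) None}"

(* The cone \<check>C\<Delta>F, realised inside the functions E \<rightarrow> \<real> via
(p,s) \<mapsto> s\<cdot>p: it is {t \<ge> 0 supported in F with \<Sum>t \<le> 1}, the apex being 0. *)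
definition ccone :: "'e set \<Rightarrow> ('e \<Rightarrow> real) set" where
  "ccone F = {t. (\<forall>i. 0 \<le> t i) \<and> (\<forall>i. i \<notin> F \<longrightarrow> t i = 0) \<and> sum t F \<le> 1}"

definition apex :: "'e \<Rightarrow> real" where
  "apex = (\<lambda>_. 0)"

definition layout :: "'e set \<Rightarrow> 'e set set \<Rightarrow> bool" where
  "layout E A \<longleftrightarrow> (\<forall>F\<in>A. F \<subseteq> E \<and> F \<noteq> {}) \<and> (\<forall>F\<in>A. \<forall>G\<in>A. F \<noteq> G \<longrightarrow> F \<inter> G = {})"

(* \<check>C\<Delta>[A] = \<Or>_{F\<in>A} \<check>C\<Delta>F as a subspace of \<check>C\<Delta>E. *)
definition coneL :: "'e set set \<Rightarrow> ('e \<Rightarrow> real) set" where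
  "coneL A = insert apex (\<Union>F\<in>A. ccone F)"

definition wedge_map :: "'z \<Rightarrow> 'e set set \<Rightarrow> ('e set \<Rightarrow> ('e \<Rightarrow> real) \<Rightarrow> 'z) \<Rightarrow> ('e \<Rightarrow> real) \<Rightarrow> 'z" where
  "wedge_map a A v = restrict
     (\<lambda>t. if t = apex then a else v (SOME F. F \<in> A \<and> t \<in> ccone F) t) (coneL A)"

(* Combining product: the multilinear map with
  \<langle>v_F\<rangle>_F \<mapsto> \<langle>\<Or>_F v_F\<rangle>, written out on a family of ensembles. *)
definition combine :: "'z \<Rightarrow> 'e set set \<Rightarrow> ('e set \<Rightarrow> ((('e \<Rightarrow> real) \<Rightarrow> 'z) \<Rightarrow>\<^sub>0 int))
                       \<Rightarrow> ((('e \<Rightarrow> real) \<Rightarrow> 'z) \<Rightarrow>\<^sub>0 int)" where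
  "combine a A Qs =
     (\<Sum>v \<in> (\<Pi>\<^sub>E F\<in>A. Poly_Mapping.keys (Qs F)).
        frag_cmul (\<Prod>F\<in>A. Poly_Mapping.lookup (Qs F) (v F)) (frag_of (wedge_map a A v)))"

definition almost_fissile ::
  "'x topology \<Rightarrow> 'x \<Rightarrow> 'y topology \<Rightarrow> 'y \<Rightarrow> ('x \<Rightarrow> 'y) \<Rightarrow> nat \<Rightarrow> 'e set
   \<Rightarrow> ((('e \<Rightarrow> real) \<Rightarrow> 'x \<Rightarrow> 'y) \<Rightarrow>\<^sub>0 int) \<Rightarrow> bool" where
  "almost_fissile X x0 Y y0 a r E Q \<longleftrightarrow>
     (\<forall>A. layout E A \<longrightarrow>
        combine a A (\<lambda>F. restr_frag (ccone F) Q) - restr_frag (coneL A) Q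
          \<in> filtX (r + 1) (top_of_set (coneL A)) X x0 Y y0)"

end

theory Submission
  imports Defs
begin

text \<open>For r = 1 the filtration only tests restrictions to the base point and one further
point (u, x) of the half-smash, and such a restriction factors through evaluation at u.
It therefore suffices that the combining product of the restrictions of Q to the cones of
a layout and the restriction of Q to their wedge have the same push-forward under evaluation
at every point u of the wedge. At the apex all maps take the value a and all ensembles
involved are affine. Any other u lies in exactly one cone of the layout; there the wedge
reads off only that factor, and summing out the remaining affine factors leaves Q
evaluated at u.\<close>

definition frag_map :: "('a \<Rightarrow> 'b) \<Rightarrow> ('a \<Rightarrow>\<^sub>0 int) \<Rightarrow> ('b \<Rightarrow>\<^sub>0 int)" where
  "frag_map g V = frag_extend (\<lambda>x. frag_of (g x)) V"

lemma lookup_frag_map: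
  "Poly_Mapping.lookup (frag_map g V) y =
     (\<Sum>k\<in>Poly_Mapping.keys V. Poly_Mapping.lookup V k * (if y = g k then 1 else 0))"
  unfolding frag_map_def frag_extend_def by (simp add: lookup_sum lookup_frag_of)

lemma keys_frag_map: "Poly_Mapping.keys (frag_map g V) \<subseteq> g ` Poly_Mapping.keys V"
  unfolding frag_map_def using keys_frag_extend by (fastforce simp: keys_frag_of)

lemma frag_map_0 [simp]: "frag_map g 0 = 0"
  by (simp add: frag_map_def)

lemma frag_map_diff: "frag_map g (V - W) = frag_map g V - frag_map g W"
  by (simp add: frag_map_def frag_extend_diff)

lemma frag_map_frag_map: "frag_map h (frag_map g V) = frag_map (h \<circ> g) V"
  unfolding frag_map_def using frag_extend_compose[of "\<lambda>y. frag_of (h y)" g V]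
  by (simp add: comp_def)

lemma augm_frag_map: "augm (frag_map g V) = augm V"
proof -
  have augm_eq: "augm W = Poly_Mapping.lookup (frag_map (\<lambda>_. ()) W) ()" for W :: "'c \<Rightarrow>\<^sub>0 int"
    by (simp add: augm_def lookup_frag_map)
  show ?thesis
    unfolding augm_eq frag_map_frag_map by (simp add: comp_def)
qed

lemma restr_frag_eq_frag_map: "restr_frag R V = frag_map (\<lambda>v. restrict v R) V"
  by (simp add: restr_frag_def frag_map_def)

lemma in_free_mono: "in_free V W \<Longrightarrow> W \<subseteq> W' \<Longrightarrow> in_free V W'"
  by (auto simp: in_free_def)

lemma in_free_diff: "in_free V W \<Longrightarrow> in_free V' W \<Longrightarrow> in_free (V - V') W"
  using keys_diff[of V V'] by (auto simp: in_free_def)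

lemma topspace_compact_open: "topspace (compact_open X x0 Y y0) = bmaps X x0 Y y0"
proof -
  have "UNIV \<in> {{f. f ` K \<subseteq> U} | K U. compactin X K \<and> openin Y U}"
    by (rule CollectI, rule exI[of _ "{}"], rule exI[of _ "{}"]) auto
  then show ?thesis unfolding compact_open_def by auto
qed

lemma based_maps_subset_umaps: "based_maps T t0 Z z0 \<subseteq> umaps T Z"
  by (auto simp: based_maps_def umaps_def)

lemma restrict_in_based_maps:
  assumes "q \<in> based_maps T t0 Z z0" "t0 \<in> S" "S \<subseteq> topspace T"
  shows "restrict q S \<in> based_maps (subtopology T S) t0 Z z0"
proof -
  have "continuous_map (subtopology T S) Z q"
    using assms(1) by (simp add: based_maps_def continuous_map_from_subtopology)
  then have "continuous_map (subtopology T S) Z (restrict q S)"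
    by (rule continuous_map_eq) simp
  then show ?thesis
    using assms by (auto simp: based_maps_def Int_absorb1)
qed

lemma in_free_restr_frag:
  assumes "in_free Q (based_maps T t0 Z z0)" "t0 \<in> S" "S \<subseteq> topspace T"
  shows "in_free (restr_frag S Q) (based_maps (subtopology T S) t0 Z z0)"
  using keys_frag_map[of "\<lambda>v. restrict v S" Q] assms restrict_in_based_maps
  by (fastforce simp: in_free_def restr_frag_eq_frag_map)

lemma closed_ccone: "finite F \<Longrightarrow> closed (ccone F)"
proof -
  assume "finite F"
  have eq: "ccone F = (\<Inter>i. {t. 0 \<le> t i}) \<inter> (\<Inter>i\<in>-F. {t. t i = 0}) \<inter> {t. sum t F \<le> 1}"
    unfolding ccone_def by auto
  have "continuous_on UNIV (\<lambda>t::'a\<Rightarrow>real. sum t F)"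
    by (intro continuous_intros continuous_on_sum) simp
  then show ?thesis unfolding eq
    by (intro closed_Int closed_INT ballI closed_Collect_le closed_Collect_eq continuous_on_const)
      simp_all
qed

lemma apex_in_ccone: "apex \<in> ccone F"
  by (simp add: ccone_def apex_def)

lemma ccone_empty: "ccone {} = {apex}"
  by (auto simp: ccone_def apex_def)

lemma ccone_mono: "finite E \<Longrightarrow> F \<subseteq> E \<Longrightarrow> ccone F \<subseteq> ccone E"
proof
  fix t assume "finite E" "F \<subseteq> E" "t \<in> ccone F"
  moreover from this have "sum t E = sum t F"
    by (intro sum.mono_neutral_right) (auto simp: ccone_def)
  ultimately show "t \<in> ccone E" by (auto simp: ccone_def)
qed

lemma ccone_Int_disjoint:
  assumes "F \<inter> G = {}"
  shows "ccone F \<inter> ccone G = {apex}"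
proof
  show "ccone F \<inter> ccone G \<subseteq> {apex}"
  proof
    fix t assume "t \<in> ccone F \<inter> ccone G"
    then have "t i = 0" for i
      using assms by (cases "i \<in> F") (auto simp: ccone_def)
    then show "t \<in> {apex}" by (auto simp: apex_def)
  qed
qed (simp add: apex_in_ccone)

lemma layout_finite:
  assumes "finite E" "layout E A"
  shows "finite A"
proof -
  have "A \<subseteq> Pow E"
    using assms(2) by (auto simp: layout_def)
  then show ?thesis
    using assms(1) finite_subset by blast
qed

lemma layout_disjoint: "layout E A \<Longrightarrow> disjoint A"
  by (auto simp: layout_def disjoint_def)

lemma apex_in_coneL: "apex \<in> coneL A"
  by (simp add: coneL_def)

lemma ccone_subset_coneL: "F \<in> A \<Longrightarrow> ccone F \<subseteq> coneL A"
  by (auto simp: coneL_def)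

lemma coneL_subset_ccone:
  assumes "finite E" "layout E A"
  shows "coneL A \<subseteq> ccone E"
  using assms ccone_mono[OF assms(1)] by (auto simp: coneL_def layout_def apex_in_ccone)

lemma wedge_map_apex: "wedge_map a A v apex = a"
  by (simp add: wedge_map_def apex_in_coneL)

lemma wedge_map_ccone:
  assumes "disjoint A" "F \<in> A" "t \<in> ccone F" "t \<noteq> apex"
  shows "wedge_map a A v t = v F t"
proof -
  have "(SOME G. G \<in> A \<and> t \<in> ccone G) = F"
  proof (rule some_equality)
    fix G assume "G \<in> A \<and> t \<in> ccone G"
    then show "G = F"
      using assms ccone_Int_disjoint[of G F] by (auto simp: disjoint_def)
  qed (use assms in auto)
  then show ?thesis
    using assms ccone_subset_coneL by (auto simp: wedge_map_def)
qed

lemma continuous_map_wedge_map: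
  assumes "finite E" "layout E A" "a \<in> topspace Z"
    and cont: "\<And>F. F \<in> A \<Longrightarrow> continuous_map (top_of_set (ccone F)) Z (v F)"
    and apex: "\<And>F. F \<in> A \<Longrightarrow> v F apex = a"
  shows "continuous_map (top_of_set (coneL A)) Z (wedge_map a A v)"
proof -
  \<comment> \<open>The empty face, whose cone is the apex alone, makes the pieces cover the wedge
    even if A is empty.\<close>
  let ?I = "insert {} A"
  define f where "f F = (if F = {} then (\<lambda>_. a) else v F)" for F
  have sub: "ccone F \<subseteq> coneL A" if "F \<in> ?I" for F
    using that ccone_subset_coneL by (auto simp: ccone_empty apex_in_coneL)
  show ?thesis
  proof (rule pasting_lemma_closed[where I = ?I and T = ccone and f = f])
    show "finite ?I"
      using layout_finite assms(1,2) by simp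
  next
    fix F assume F: "F \<in> ?I"
    then have "finite F"
      using assms(1,2) finite_subset by (auto simp: layout_def)
    then show "closedin (top_of_set (coneL A)) (ccone F)"
      using sub[OF F] by (simp add: closed_subset closed_ccone)
    show "continuous_map (subtopology (top_of_set (coneL A)) (ccone F)) Z (f F)"
      using F cont[of F] assms(3) sub[OF F]
      by (auto simp: f_def subtopology_subtopology Int_absorb1)
  next
    fix F G t
    assume FG: "F \<in> ?I" "G \<in> ?I" "t \<in> topspace (top_of_set (coneL A)) \<inter> ccone F \<inter> ccone G"
    have "t = apex" if "F \<noteq> G"
      using FG that layout_disjoint[OF assms(2)] ccone_Int_disjoint[of F G]
      by (auto simp: disjoint_def)
    then show "f F t = f G t"
      using FG apex by (cases "F = G") (auto simp: f_def)
  next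
    fix t assume t: "t \<in> topspace (top_of_set (coneL A))"
    show "\<exists>F. F \<in> ?I \<and> t \<in> ccone F \<and> wedge_map a A v t = f F t"
    proof (cases "t = apex")
      case True
      then show ?thesis
        by (intro exI[of _ "{}"]) (simp add: ccone_empty f_def wedge_map_apex)
    next
      case False
      then obtain F where "F \<in> A" "t \<in> ccone F"
        using t by (auto simp: coneL_def)
      then show ?thesis
        using False wedge_map_ccone[OF layout_disjoint[OF assms(2)]] assms(2)
        by (intro exI[of _ F]) (auto simp: f_def layout_def)
    qed
  qed
qed

lemma wedge_map_in_based_maps:
  assumes "finite E" "layout E A" "a \<in> topspace Z"
    and v: "\<And>F. F \<in> A \<Longrightarrow> v F \<in> based_maps (top_of_set (ccone F)) apex Z a"
  shows "wedge_map a A v \<in> based_maps (top_of_set (coneL A)) apex Z a"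
proof -
  have "continuous_map (top_of_set (coneL A)) Z (wedge_map a A v)"
    using v by (intro continuous_map_wedge_map[OF assms(1-3)]) (auto simp: based_maps_def)
  then show ?thesis
    by (simp add: based_maps_def wedge_map_apex wedge_map_def apex_in_coneL)
qed

lemma keys_combine:
  "Poly_Mapping.keys (combine a A Qs) \<subseteq> wedge_map a A ` (\<Pi>\<^sub>E F\<in>A. Poly_Mapping.keys (Qs F))"
proof
  fix w assume "w \<in> Poly_Mapping.keys (combine a A Qs)"
  from subsetD[OF keys_sum this[unfolded combine_def]]
  obtain v where v: "v \<in> (\<Pi>\<^sub>E F\<in>A. Poly_Mapping.keys (Qs F))"
    and "w \<in> Poly_Mapping.keys (frag_cmul (\<Prod>F\<in>A. Poly_Mapping.lookup (Qs F) (v F))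
                                           (frag_of (wedge_map a A v)))"
    by blast
  then have "w = wedge_map a A v"
    using subsetD[OF keys_cmul] by (fastforce simp: keys_frag_of)
  then show "w \<in> wedge_map a A ` (\<Pi>\<^sub>E F\<in>A. Poly_Mapping.keys (Qs F))"
    using v by blast
qed

lemma in_free_combine:
  assumes "finite E" "layout E A" "a \<in> topspace Z"
    and Qs: "\<And>F. F \<in> A \<Longrightarrow> in_free (Qs F) (based_maps (top_of_set (ccone F)) apex Z a)"
  shows "in_free (combine a A Qs) (based_maps (top_of_set (coneL A)) apex Z a)"
  unfolding in_free_def
proof
  fix w assume "w \<in> Poly_Mapping.keys (combine a A Qs)"
  from subsetD[OF keys_combine this]
  obtain v where v: "v \<in> (\<Pi>\<^sub>E F\<in>A. Poly_Mapping.keys (Qs F))" and w: "w = wedge_map a A v"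
    by blast
  have "v F \<in> based_maps (top_of_set (ccone F)) apex Z a" if "F \<in> A" for F
    using PiE_mem[OF v that] Qs[OF that] unfolding in_free_def by blast
  then show "w \<in> based_maps (top_of_set (coneL A)) apex Z a"
    unfolding w by (rule wedge_map_in_based_maps[OF assms(1-3)])
qed

lemma in_free_combine_diff_restr_frag:
  assumes E: "finite E" and A: "layout E A" and a: "a \<in> topspace Z"
    and Q: "in_free Q (based_maps (top_of_set (ccone E)) apex Z a)"
  shows "in_free (combine a A (\<lambda>F. restr_frag (ccone F) Q) - restr_frag (coneL A) Q)
                 (umaps (top_of_set (coneL A)) Z)"
proof -
  have restr_Q: "in_free (restr_frag S Q) (based_maps (top_of_set S) apex Z a)"
    if "apex \<in> S" "S \<subseteq> ccone E" for S
    using in_free_restr_frag[OF Q] that by (simp add: subtopology_subtopology Int_absorb1)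
  have "in_free (combine a A (\<lambda>F. restr_frag (ccone F) Q)) (based_maps (top_of_set (coneL A)) apex Z a)"
  proof (rule in_free_combine[OF E A a])
    fix F assume "F \<in> A"
    then have "ccone F \<subseteq> ccone E"
      using A ccone_mono[OF E] by (auto simp: layout_def)
    then show "in_free (restr_frag (ccone F) Q) (based_maps (top_of_set (ccone F)) apex Z a)"
      by (rule restr_Q[OF apex_in_ccone])
  qed
  moreover have "in_free (restr_frag (coneL A) Q) (based_maps (top_of_set (coneL A)) apex Z a)"
    by (rule restr_Q[OF apex_in_coneL coneL_subset_ccone[OF E A]])
  ultimately show ?thesis
    by (rule in_free_mono[OF in_free_diff based_maps_subset_umaps])
qed

lemma lookup_frag_map_combine:
  assumes "finite A"
  shows "Poly_Mapping.lookup (frag_map g (combine a A Qs)) y =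
    (\<Sum>v\<in>(\<Pi>\<^sub>E F\<in>A. Poly_Mapping.keys (Qs F)).
       (\<Prod>F\<in>A. Poly_Mapping.lookup (Qs F) (v F)) * (if y = g (wedge_map a A v) then 1 else 0))"
  unfolding combine_def frag_map_def frag_extend_sum[OF finite_PiE[OF assms finite_keys]]
  by (simp add: lookup_sum frag_extend_cmul lookup_frag_of)

lemma sum_PiE_prod_lookup_marginal:
  assumes "finite A" "F0 \<in> A" "\<And>F. F \<in> A \<Longrightarrow> F \<noteq> F0 \<Longrightarrow> augm (Qs F) = 1"
  shows "(\<Sum>v\<in>(\<Pi>\<^sub>E F\<in>A. Poly_Mapping.keys (Qs F)).
            (\<Prod>F\<in>A. Poly_Mapping.lookup (Qs F) (v F)) * h (v F0))
       = (\<Sum>k\<in>Poly_Mapping.keys (Qs F0). Poly_Mapping.lookup (Qs F0) k * h k)"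
proof -
  define f where "f F k = Poly_Mapping.lookup (Qs F) k * (if F = F0 then h k else 1)" for F k
  have "(\<Sum>v\<in>(\<Pi>\<^sub>E F\<in>A. Poly_Mapping.keys (Qs F)).
            (\<Prod>F\<in>A. Poly_Mapping.lookup (Qs F) (v F)) * h (v F0))
      = (\<Sum>v\<in>(\<Pi>\<^sub>E F\<in>A. Poly_Mapping.keys (Qs F)). \<Prod>F\<in>A. f F (v F))"
    using assms(1,2) by (simp add: f_def prod.distrib prod.delta)
  also have "\<dots> = (\<Prod>F\<in>A. \<Sum>k\<in>Poly_Mapping.keys (Qs F). f F k)"
    by (rule prod_sum_PiE[symmetric]) (simp_all add: assms(1))
  also have "\<dots> = (\<Prod>F\<in>A. if F = F0 then \<Sum>k\<in>Poly_Mapping.keys (Qs F0). f F0 k else 1)"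
    using assms(3) by (intro prod.cong) (auto simp: f_def augm_def)
  also have "\<dots> = (\<Sum>k\<in>Poly_Mapping.keys (Qs F0). Poly_Mapping.lookup (Qs F0) k * h k)"
    using assms(1,2) by (simp add: f_def)
  finally show ?thesis .
qed

lemma frag_map_eval_combine_restr_frag:
  fixes Q :: "((('e \<Rightarrow> real) \<Rightarrow> 'z) \<Rightarrow>\<^sub>0 int)"
  assumes "finite A" "disjoint A" "u \<in> coneL A" "affine_ens Q"
    and Q_apex: "\<And>q. q \<in> Poly_Mapping.keys Q \<Longrightarrow> q apex = a"
  shows "frag_map (\<lambda>w. w u) (combine a A (\<lambda>F. restr_frag (ccone F) Q)) = frag_map (\<lambda>q. q u) Q"
proof (rule poly_mapping_eqI)
  fix y
  let ?Qs = "\<lambda>F. restr_frag (ccone F) Q"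
  let ?P = "\<Pi>\<^sub>E F\<in>A. Poly_Mapping.keys (?Qs F)"
  have augm_Qs: "augm (?Qs F) = 1" for F
    using assms(4) by (simp add: affine_ens_def restr_frag_eq_frag_map augm_frag_map)
  show "Poly_Mapping.lookup (frag_map (\<lambda>w. w u) (combine a A ?Qs)) y =
        Poly_Mapping.lookup (frag_map (\<lambda>q. q u) Q) y"
  proof (cases "u = apex")
    case True
    have "(\<Sum>v\<in>?P. \<Prod>F\<in>A. Poly_Mapping.lookup (?Qs F) (v F)) = 1"
      using prod_sum_PiE[where B = "\<lambda>F. Poly_Mapping.keys (?Qs F)"
          and f = "\<lambda>F k. Poly_Mapping.lookup (?Qs F) k", OF assms(1)] augm_Qs
      by (simp add: augm_def)
    then have "Poly_Mapping.lookup (frag_map (\<lambda>w. w u) (combine a A ?Qs)) y = (if y = a then 1 else 0)"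
      by (simp add: lookup_frag_map_combine assms(1) True wedge_map_apex flip: sum_distrib_right)
    also have "\<dots> = (\<Sum>k\<in>Poly_Mapping.keys Q. Poly_Mapping.lookup Q k * (if y = a then 1 else 0))"
      using assms(4) by (simp add: affine_ens_def augm_def flip: sum_distrib_right)
    also have "\<dots> = Poly_Mapping.lookup (frag_map (\<lambda>q. q u) Q) y"
      unfolding lookup_frag_map using True Q_apex by (intro sum.cong) auto
    finally show ?thesis .
  next
    case False
    then obtain F0 where F0: "F0 \<in> A" "u \<in> ccone F0"
      using assms(3) by (auto simp: coneL_def)
    have "Poly_Mapping.lookup (frag_map (\<lambda>w. w u) (combine a A ?Qs)) y =
        (\<Sum>v\<in>?P. (\<Prod>F\<in>A. Poly_Mapping.lookup (?Qs F) (v F)) * (if y = v F0 u then 1 else 0))"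
      unfolding lookup_frag_map_combine[OF assms(1)] wedge_map_ccone[OF assms(2) F0 False] ..
    also have "\<dots> = (\<Sum>k\<in>Poly_Mapping.keys (?Qs F0).
                         Poly_Mapping.lookup (?Qs F0) k * (if y = k u then 1 else 0))"
      by (rule sum_PiE_prod_lookup_marginal[OF assms(1) F0(1) augm_Qs])
    also have "\<dots> = Poly_Mapping.lookup (frag_map (\<lambda>w. w u) (?Qs F0)) y"
      by (rule lookup_frag_map[symmetric])
    also have "frag_map (\<lambda>w. w u) (?Qs F0) = frag_map (\<lambda>q. q u) Q"
      using F0(2) by (simp add: restr_frag_eq_frag_map frag_map_frag_map comp_def)
    finally show ?thesis .
  qed
qed

lemma Fsets_1_subset_pair:
  assumes "R \<in> Fsets 1 Z z0"
  obtains z where "z \<in> Z" "R \<subseteq> {z0, z}"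
proof (cases "R \<subseteq> {z0}")
  case True
  then show ?thesis
    using that assms by (auto simp: Fsets_def)
next
  case False
  then obtain z where z: "z \<in> R" "z \<noteq> z0"
    by blast
  have "R \<subseteq> {z0, z}"
  proof
    fix r assume "r \<in> R"
    show "r \<in> {z0, z}"
    proof (rule ccontr)
      assume "r \<notin> {z0, z}"
      then have "card {z0, z, r} = 3"
        using z(2) by (auto simp: card_insert_if)
      moreover have "card {z0, z, r} \<le> card R"
        using assms z(1) \<open>r \<in> R\<close> by (intro card_mono) (auto simp: Fsets_def)
      ultimately show False
        using assms by (simp add: Fsets_def)
    qed
  qed
  then show ?thesis
    using that assms z(1) by (auto simp: Fsets_def)
qed

lemma restrict_sharp_pair:
  assumes "R \<subseteq> smash_set U X x0" "R \<subseteq> {None, Some (u, x)}"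
  shows "restrict (sharp X x0 y0 U w) R = restrict (case_option y0 (\<lambda>_. w u x)) R"
  using assms by (auto simp: sharp_def restrict_def fun_eq_iff split: option.split)

lemma frag_map_sharp_in_filt_2:
  assumes "U \<noteq> {}" and eval_0: "\<And>u. u \<in> U \<Longrightarrow> frag_map (\<lambda>w. w u) V = 0"
  shows "frag_map (sharp X x0 y0 U) V \<in> filt 2 (smash_set U X x0) None"
  unfolding filt_def
proof (intro CollectI ballI)
  fix R assume R: "R \<in> Fsets (2 - 1) (smash_set U X x0) None"
  obtain u x where "u \<in> U" and pair: "R \<subseteq> {None, Some (u, x)}"
  proof -
    obtain z where "z \<in> smash_set U X x0" "R \<subseteq> {None, z}"
      using Fsets_1_subset_pair[of R] R by auto
    then show ?thesis
      using that assms(1) by (auto simp: smash_set_def)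
  qed
  have "restrict (sharp X x0 y0 U w) R = restrict (case_option y0 (\<lambda>_. w u x)) R" for w
    using R by (intro restrict_sharp_pair[OF _ pair]) (simp add: Fsets_def)
  then have "(\<lambda>v. restrict v R) \<circ> sharp X x0 y0 U
      = (\<lambda>y. restrict (case_option y0 (\<lambda>_. y)) R) \<circ> (\<lambda>f. f x) \<circ> (\<lambda>w. w u)"
    by (intro ext) (simp only: comp_def)
  then have "restr_frag R (frag_map (sharp X x0 y0 U) V)
      = frag_map ((\<lambda>y. restrict (case_option y0 (\<lambda>_. y)) R) \<circ> (\<lambda>f. f x)) (frag_map (\<lambda>w. w u) V)"
    by (simp add: restr_frag_eq_frag_map frag_map_frag_map comp_assoc)
  then show "restr_frag R (frag_map (sharp X x0 y0 U) V) = 0"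
    using eval_0[OF \<open>u \<in> U\<close>] by simp
qed

theorem lemma13p2:
  fixes X :: "'x topology" and Y :: "'y topology" and x0 :: 'x and y0 :: 'y
    and a :: "'x \<Rightarrow> 'y" and E :: "'e set"
    and Q :: "((('e \<Rightarrow> real) \<Rightarrow> 'x \<Rightarrow> 'y) \<Rightarrow>\<^sub>0 int)"
  assumes "x0 \<in> topspace X" and "y0 \<in> topspace Y"
    and "compact_space X" and "Hausdorff_space X"
    and "a \<in> bmaps X x0 Y y0"
    and "finite E" and "E \<noteq> {}"
    and "in_free Q (based_maps (top_of_set (ccone E)) apex (compact_open X x0 Y y0) a)"
    and "affine_ens Q"
  shows "almost_fissile X x0 Y y0 a 1 E Q"
  unfolding almost_fissile_def
proof (intro allI impI)
  fix A assume A: "layout E A"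
  define D where "D = combine a A (\<lambda>F. restr_frag (ccone F) Q) - restr_frag (coneL A) Q"
  have Q_apex: "\<And>q. q \<in> Poly_Mapping.keys Q \<Longrightarrow> q apex = a"
    using assms(8) by (auto simp: in_free_def based_maps_def)
  have "in_free D (umaps (top_of_set (coneL A)) (compact_open X x0 Y y0))"
    unfolding D_def using assms(5)
    by (intro in_free_combine_diff_restr_frag[OF assms(6) A _ assms(8)])
      (simp add: topspace_compact_open)
  moreover have "frag_map (\<lambda>w. w u) D = 0" if "u \<in> coneL A" for u
  proof -
    have "frag_map (\<lambda>w. w u) (combine a A (\<lambda>F. restr_frag (ccone F) Q)) = frag_map (\<lambda>q. q u) Q"
      using layout_finite[OF assms(6) A] layout_disjoint[OF A] that assms(9) Q_apex
      by (rule frag_map_eval_combine_restr_frag)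
    then show ?thesis
      using that by (simp add: D_def frag_map_diff restr_frag_eq_frag_map frag_map_frag_map comp_def)
  qed
  ultimately show "D \<in> filtX (1 + 1) (top_of_set (coneL A)) X x0 Y y0"
    unfolding filtX_def frag_map_def[symmetric]
    using frag_map_sharp_in_filt_2[of "coneL A" D X x0 y0] apex_in_coneL
    by (auto simp: numeral_2_eq_2)
qed

end
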